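(* There is a constant $c$ such that for every $n\in\mathbb{N}_{\ge1}$ there exists a language $L_n$ recognized by a deterministic weak Muller automaton $\mathfrak{A}_n$ with Emerson–Lei acceptance condition, of size at most $c\cdot n$, such that Player $O$ wins $\Gamma_f(L_n)$ for some constant delay function $f$, but Player $I$ wins $\Gamma_g(L_n)$ for every delay function $g$ with $\sum_{i=0}^{n-1}g(i)\le 2^{2^n}$.
   Context: An $\omega$-automaton $\mathfrak{A}=(Q,\Sigma,q_I,\Delta,\mathrm{Acc})$ has finite state set $Q$, alphabet $\Sigma$, initial state $q_I$, transitions $\Delta\subseteq Q\times\Sigma\times Q$, accepting runs $\mathrm{Acc}\subseteq\Delta^\omega$; $L(\mathfrak{A})$ is the set of words processed by an initial accepting run. Deterministic means $\Delta$ is a total function $Q\times\Sigma\to Q$. A weak Muller automaton has $\mathcal{F}\subseteq 2^Q$ and accepts runs whose set of visited states lies in $\mathcal{F}$. Emerson–Lei representation: $\mathcal{F}$ is given by a Boolean formula $\varphi$ over variables $Q$, $\mathcal{F}$ being the sets $F\subseteq Q$ such that the assignment making exactly the elements of $F$ true satisfies $\varphi$; the size of the automaton is $|Q|+|\varphi|$ ($|\varphi|$ the length of $\varphi$). A delay function is $f:\mathbb{N}\to\mathbb{N}_{\ge1}$; it is constant if $f(i)=1$ for all $i>0$. In the delay game $\Gamma_f(L)$, $L\subseteq(\Sigma_I\times\Sigma_O)^\omega$, in round $i=0,1,\dots$ Player $I$ picks $u_i\in\Sigma_I^{f(i)}$ and then Player $O$ picks $v_i\in\Sigma_O$; $O$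 wins the play iff $\binom{u_0u_1\cdots}{v_0v_1\cdots}\in L$. Strategies: $\tau_I:\Sigma_O^*\to\Sigma_I^*$ with $|\tau_I(w)|=f(|w|)$, $\tau_O:\Sigma_I^+\to\Sigma_O$; a player wins the game if she/he has a strategy winning all consistent plays. *)

theory Defs
  imports Main
begin

datatype bformula = BTrue | BFalse | BVar nat | BNot bformula
  | BAnd bformula bformula | BOr bformula bformula

fun beval :: "(nat \<Rightarrow> bool) \<Rightarrow> bformula \<Rightarrow> bool" where
  "beval a BTrue = True"
| "beval a BFalse = False"
| "beval a (BVar q) = a q"
| "beval a (BNot p) = (\<not> beval a p)"
| "beval a (BAnd p r) = (beval a p \<and> beval a r)"
| "beval a (BOr p r) = (beval a p \<or> beval a r)"

fun blen :: "bformula \<Rightarrow> nat" where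
  "blen BTrue = 1"
| "blen BFalse = 1"
| "blen (BVar q) = 1"
| "blen (BNot p) = 1 + blen p"
| "blen (BAnd p r) = 1 + blen p + blen r"
| "blen (BOr p r) = 1 + blen p + blen r"

fun bvars :: "bformula \<Rightarrow> nat set" where
  "bvars BTrue = {}"
| "bvars BFalse = {}"
| "bvars (BVar q) = {q}"
| "bvars (BNot p) = bvars p"
| "bvars (BAnd p r) = bvars p \<union> bvars r"
| "bvars (BOr p r) = bvars p \<union> bvars r"

record dwm_aut =
  in_alph :: "nat set"
  out_alph :: "nat set"
  states :: "nat set"
  init :: nat
  delta :: "nat \<Rightarrow> nat \<times> nat \<Rightarrow> nat"
  acc :: bformula

definition wf_dwm :: "dwm_aut \<Rightarrow> bool" where
  "wf_dwm A \<longleftrightarrow> finite (in_alph A) \<and> in_alph A \<noteq> {} \<and>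
     finite (out_alph A) \<and> out_alph A \<noteq> {} \<and>
     finite (states A) \<and> init A \<in> states A \<and>
     (\<forall>q \<in> states A. \<forall>a \<in> in_alph A \<times> out_alph A. delta A q a \<in> states A) \<and>
     bvars (acc A) \<subseteq> states A"

definition aut_size :: "dwm_aut \<Rightarrow> nat" where
  "aut_size A = card (states A) + blen (acc A)"

primrec run :: "dwm_aut \<Rightarrow> (nat \<Rightarrow> nat \<times> nat) \<Rightarrow> nat \<Rightarrow> nat" where
  "run A w 0 = init A"
| "run A w (Suc i) = delta A (run A w i) (w i)"

text \<open>Weak Muller acceptance: the set of visited states satisfies the formula.\<close>
definition lang :: "dwm_aut \<Rightarrow> (nat \<Rightarrow> nat \<times> nat) set" where
  "lang A = {w. (\<forall>i. w i \<in> in_alph A \<times> out_alph A) \<and>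
                 beval (\<lambda>q. q \<in> range (run A w)) (acc A)}"

definition delay_fun :: "(nat \<Rightarrow> nat) \<Rightarrow> bool" where
  "delay_fun f \<longleftrightarrow> (\<forall>i. f i \<ge> 1)"

definition const_delay :: "(nat \<Rightarrow> nat) \<Rightarrow> bool" where
  "const_delay f \<longleftrightarrow> delay_fun f \<and> (\<forall>i>0. f i = 1)"

text \<open>Input word obtained by concatenating the blocks \<open>u 0, u 1, ...\<close>
  (each block nonempty, so position k lies within the first k+1 blocks).\<close>
definition in_word :: "(nat \<Rightarrow> nat list) \<Rightarrow> nat \<Rightarrow> nat" where
  "in_word u k = concat (map u [0..<Suc k]) ! k"

definition play_word :: "(nat \<Rightarrow> nat list) \<Rightarrow> (nat \<Rightarrow> nat) \<Rightarrow> nat \<Rightarrow> nat \<times> nat" where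
  "play_word u v k = (in_word u k, v k)"

definition O_wins :: "(nat \<Rightarrow> nat) \<Rightarrow> nat set \<Rightarrow> nat set \<Rightarrow> (nat \<Rightarrow> nat \<times> nat) set \<Rightarrow> bool" where
  "O_wins f SI SO L \<longleftrightarrow> (\<exists>tO :: nat list \<Rightarrow> nat. (\<forall>w. tO w \<in> SO) \<and>
     (\<forall>u v. (\<forall>i. length (u i) = f i \<and> set (u i) \<subseteq> SI) \<longrightarrow>
            (\<forall>i. v i = tO (concat (map u [0..<Suc i]))) \<longrightarrow>
            play_word u v \<in> L))"

definition I_wins :: "(nat \<Rightarrow> nat) \<Rightarrow> nat set \<Rightarrow> nat set \<Rightarrow> (nat \<Rightarrow> nat \<times> nat) set \<Rightarrow> bool" where
  "I_wins f SI SO L \<longleftrightarrow> (\<exists>tI :: nat list \<Rightarrow> nat list.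
     (\<forall>w. length (tI w) = f (length w) \<and> set (tI w) \<subseteq> SI) \<and>
     (\<forall>u v. (\<forall>i. v i \<in> SO) \<longrightarrow>
            (\<forall>i. u i = tI (map v [0..<i])) \<longrightarrow>
            play_word u v \<notin> L))"

end

theory Submission
  imports Defs "HOL-Library.Countable"
begin

text \<open>Read the input in blocks of \<open>n\<close> bits, i.e. as numbers below \<open>2^n\<close>. Player O commits
  to a block \<open>J\<close> during the first \<open>n\<close> rounds; she wins iff she can point out two later input
  blocks equal to \<open>J\<close> such that every block strictly between them is lexicographically smaller
  (certified by a position where the block has 0 and \<open>J\<close> has 1). Every sequence of \<open>2^2^n\<close>
  numbers below \<open>2^n\<close> contains such a dominated repeat (induction on the largest letter), so
  a lookahead of \<open>2^2^n + 1\<close> blocks suffices for O. Conversely the Zimin word over \<open>2^n\<close>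
  letters has length \<open>2^2^n - 1\<close> and no dominated repeat; if the first \<open>n\<close> delays add up to
  at most \<open>2^2^n\<close>, Player I can play it blockwise before learning \<open>J\<close>, and never play \<open>J\<close>
  afterwards.\<close>

definition dominated_repeat :: "'a::linorder list \<Rightarrow> nat \<Rightarrow> nat \<Rightarrow> bool" where
  "dominated_repeat xs p q \<longleftrightarrow> p < q \<and> q < length xs \<and> xs ! p = xs ! q \<and>
     (\<forall>k. p < k \<and> k < q \<longrightarrow> xs ! k < xs ! p)"

lemma dominated_repeat_append_right:
  "dominated_repeat xs p q \<Longrightarrow> dominated_repeat (xs @ ys) p q"
  by (auto simp: dominated_repeat_def nth_append)

lemma dominated_repeat_append_left:
  assumes "dominated_repeat ys p q"
  shows "dominated_repeat (xs @ ys) (length xs + p) (length xs + q)"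
  unfolding dominated_repeat_def
proof (intro conjI allI impI)
  fix k assume k: "length xs + p < k \<and> k < length xs + q"
  then have "p < k - length xs \<and> k - length xs < q" by auto
  with assms k show "(xs @ ys) ! k < (xs @ ys) ! (length xs + p)"
    by (auto simp: dominated_repeat_def nth_append)
qed (use assms in \<open>auto simp: dominated_repeat_def\<close>)

lemma dominated_repeat_append_leftD:
  assumes "dominated_repeat (xs @ ys) p q" "length xs \<le> p"
  shows "dominated_repeat ys (p - length xs) (q - length xs)"
  unfolding dominated_repeat_def
proof (intro conjI allI impI)
  fix k assume k: "p - length xs < k \<and> k < q - length xs"
  then have "(xs @ ys) ! (k + length xs) < (xs @ ys) ! p"
    using assms unfolding dominated_repeat_def by (metis add.commute less_diff_conv less_diff_conv2)
  then show "ys ! k < ys ! (p - length xs)"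
    using assms(2) by (simp add: nth_append)
qed (use assms in \<open>auto simp: dominated_repeat_def nth_append\<close>)

text \<open>Pigeonhole argument: between two occurrences of the largest letter everything is
  smaller, and if it occurs at most once one of the two sides is still long.\<close>
lemma dominated_repeat_exists:
  fixes xs :: "nat list"
  assumes "set xs \<subseteq> {..<m}" "2 ^ m \<le> length xs"
  shows "\<exists>p q. dominated_repeat xs p q"
  using assms
proof (induction m arbitrary: xs)
  case 0
  then show ?case by auto
next
  case (Suc m)
  show ?case
  proof (cases "m \<in> set xs")
    case False
    with Suc.prems have "set xs \<subseteq> {..<m}" "2 ^ m \<le> length xs" by (auto simp: less_Suc_eq)
    then show ?thesis by (rule Suc.IH)
  next
    case True
    then obtain ys zs where xs: "xs = ys @ m # zs" and "m \<notin> set ys"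
      by (metis split_list_first)
    with Suc.prems(1) have ys: "set ys \<subseteq> {..<m}" and zs: "set zs \<subseteq> {..<Suc m}"
      by (auto simp: less_Suc_eq)
    show ?thesis
    proof (cases "m \<in> set zs")
      case True
      then obtain zs1 zs2 where zs_split: "zs = zs1 @ m # zs2" and "m \<notin> set zs1"
        by (metis split_list_first)
      with zs have "\<forall>x\<in>set zs1. x < m" by (auto simp: less_Suc_eq)
      then have "dominated_repeat (m # zs1 @ [m]) 0 (Suc (length zs1))"
        by (auto simp: dominated_repeat_def nth_append nth_Cons split: nat.split)
      then have "dominated_repeat (ys @ (m # zs1 @ [m]) @ zs2)
          (length ys + 0) (length ys + Suc (length zs1))"
        by (rule dominated_repeat_append_left[OF dominated_repeat_append_right])
      then show ?thesis using xs zs_split by auto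
    next
      case False
      with zs have zs': "set zs \<subseteq> {..<m}" by (auto simp: less_Suc_eq)
      from Suc.prems(2) xs have "2 ^ m \<le> length ys \<or> 2 ^ m \<le> length zs" by auto
      then show ?thesis
      proof
        assume "2 ^ m \<le> length ys"
        then obtain p q where "dominated_repeat ys p q" using Suc.IH ys by blast
        then show ?thesis using xs dominated_repeat_append_right by blast
      next
        assume "2 ^ m \<le> length zs"
        then obtain p q where "dominated_repeat zs p q" using Suc.IH zs' by blast
        then have "dominated_repeat ((ys @ [m]) @ zs) (length (ys @ [m]) + p) (length (ys @ [m]) + q)"
          by (rule dominated_repeat_append_left)
        then show ?thesis using xs by auto
      qed
    qed
  qed
qed

lemma dominated_repeat_split_max:
  assumes "dominated_repeat (xs @ c # ys) p q" "\<forall>x \<in> set xs \<union> set ys. x < c"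
  shows "(\<exists>p q. dominated_repeat xs p q) \<or> (\<exists>p q. dominated_repeat ys p q)"
proof -
  let ?zs = "xs @ c # ys" and ?l = "length xs"
  have pq: "p < q" "q < length ?zs" "?zs ! p = ?zs ! q" "\<forall>k. p < k \<and> k < q \<longrightarrow> ?zs ! k < ?zs ! p"
    using assms(1) by (auto simp: dominated_repeat_def)
  have below: "i \<noteq> ?l \<Longrightarrow> i < length ?zs \<Longrightarrow> ?zs ! i < c" for i
    using assms(2) by (auto simp: nth_append nth_Cons split: nat.split dest: nth_mem)
  consider "q < ?l" | "?l < p" | "p \<le> ?l \<and> ?l \<le> q" by linarith
  then show ?thesis
  proof cases
    case 1
    then have "dominated_repeat xs p q" using assms(1) by (auto simp: dominated_repeat_def nth_append)
    then show ?thesis by blast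
  next
    case 2
    then have "dominated_repeat (c # ys) (p - ?l) (q - ?l)"
      using dominated_repeat_append_leftD[OF assms(1)] by simp
    then have "dominated_repeat ([c] @ ys) (Suc (p - Suc ?l)) (Suc (q - Suc ?l))"
      using 2 pq(1) by (simp add: Suc_diff_Suc)
    then have "dominated_repeat ys (p - Suc ?l) (q - Suc ?l)"
      using dominated_repeat_append_leftD[of "[c]" ys] by fastforce
    then show ?thesis by blast
  next
    case 3
    have c: "?zs ! ?l = c" by simp
    consider "p = ?l" | "q = ?l" | "p < ?l \<and> ?l < q" using 3 by linarith
    then have False
    proof cases
      case 1
      then show False using pq(1-3) below[of q] c by simp
    next
      case 2
      then show False using pq(1-3) below[of p] c by simp
    next
      case 3
      then show False using pq(2,4) below[of p] c by fastforce
    qed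
    then show ?thesis ..
  qed
qed

fun zimin :: "nat \<Rightarrow> nat list" where
  "zimin 0 = []"
| "zimin (Suc m) = zimin m @ m # zimin m"

lemma length_zimin: "length (zimin m) = 2 ^ m - 1"
  by (induction m) auto

lemma set_zimin: "set (zimin m) \<subseteq> {..<m}"
  by (induction m) auto

lemma zimin_no_dominated_repeat: "\<not> dominated_repeat (zimin m) p q"
proof (induction m arbitrary: p q)
  case 0
  then show ?case by (simp add: dominated_repeat_def)
next
  case (Suc m)
  have "\<forall>x \<in> set (zimin m) \<union> set (zimin m). x < m" using set_zimin by auto
  then show ?case
    using dominated_repeat_split_max[of "zimin m" m "zimin m" p q] Suc.IH by auto
qed

fun bits_val :: "bool list \<Rightarrow> nat" where
  "bits_val [] = 0"
| "bits_val (b # bs) = of_bool b * 2 ^ length bs + bits_val bs"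

fun bits_of :: "nat \<Rightarrow> nat \<Rightarrow> bool list" where
  "bits_of 0 x = []"
| "bits_of (Suc n) x = (2 ^ n \<le> x) # bits_of n (x mod 2 ^ n)"

lemma bits_val_less: "bits_val bs < 2 ^ length bs"
  by (induction bs) auto

lemma length_bits_of [simp]: "length (bits_of n x) = n"
  by (induction n arbitrary: x) auto

lemma bits_val_bits_of: "x < 2 ^ n \<Longrightarrow> bits_val (bits_of n x) = x"
proof (induction n arbitrary: x)
  case (Suc n)
  then show ?case by (cases "2 ^ n \<le> x") (auto simp: le_mod_geq)
qed simp

lemma bits_val_inj: "length xs = length ys \<Longrightarrow> bits_val xs = bits_val ys \<Longrightarrow> xs = ys"
proof (induction xs arbitrary: ys)
  case (Cons x xs)
  then obtain y ys' where ys: "ys = y # ys'" and len: "length xs = length ys'"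
    by (cases ys) auto
  have "x = y" using Cons.prems ys len bits_val_less[of xs] bits_val_less[of ys']
    by (cases x; cases y) auto
  then show ?case using Cons ys len by auto
qed simp

definition bits_less_at :: "bool list \<Rightarrow> bool list \<Rightarrow> nat \<Rightarrow> bool" where
  "bits_less_at xs ys d \<longleftrightarrow> d < length xs \<and> take d xs = take d ys \<and> \<not> xs ! d \<and> ys ! d"

lemma bits_val_less_iff:
  "length xs = length ys \<Longrightarrow> bits_val xs < bits_val ys \<longleftrightarrow> (\<exists>d. bits_less_at xs ys d)"
proof (induction xs arbitrary: ys)
  case Nil
  then show ?case by (simp add: bits_less_at_def)
next
  case (Cons x xs)
  then obtain y ys' where ys: "ys = y # ys'" and len: "length xs = length ys'"
    by (cases ys) auto
  have at_Suc: "bits_less_at (x # xs) (y # ys') (Suc d) \<longleftrightarrow> x = y \<and> bits_less_at xs ys' d" for d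
    by (auto simp: bits_less_at_def)
  have at_0: "bits_less_at (x # xs) (y # ys') 0 \<longleftrightarrow> \<not> x \<and> y"
    by (simp add: bits_less_at_def)
  have "(\<exists>d. bits_less_at (x # xs) ys d) \<longleftrightarrow>
      (\<not> x \<and> y) \<or> (x = y \<and> (\<exists>d. bits_less_at xs ys' d))"
    unfolding ys by (metis at_0 at_Suc not0_implies_Suc)
  also have "\<dots> \<longleftrightarrow> bits_val (x # xs) < bits_val ys"
    using Cons.IH[OF len] ys len bits_val_less[of xs] bits_val_less[of ys']
    by (cases x; cases y) auto
  finally show ?case by simp
qed

text \<open>In block 0 Player O commits
  to a bit string \<open>J\<close> by her outputs 0/1. Later she marks a block \<open>P\<close> by output 1 at its first
  position, then in every following block the first position where the input has 0 and \<open>J\<close>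
  has 1 (a certificate that the block is lexicographically below \<open>J\<close>), and finally a block \<open>Q\<close>
  by output 2. The automaton remembers the input bits of \<open>P\<close>, of \<open>Q\<close> and of the certified
  prefixes together with their positions, and the acceptance formula checks them against the
  remembered commitment.\<close>

datatype state = Start | Commit nat bool | Wait nat | First nat bool | Prefix nat bool | Dip nat
  | After nat | Second nat bool | Accept | Reject

instance state :: countable by countable_datatype

definition enter_wait :: "nat \<Rightarrow> nat \<Rightarrow> state" where
  "enter_wait a c = (if c = 1 then First 0 (a = 1) else Wait 0)"

definition enter_middle :: "nat \<Rightarrow> nat \<Rightarrow> state" where
  "enter_middle a c = (if c = 2 then Second 0 (a = 1)
     else if c = 1 then (if a = 1 then Reject else Dip 0) else Prefix 0 (a = 1))"

fun aut_step :: "nat \<Rightarrow> state \<Rightarrow> nat \<times> nat \<Rightarrow> state" where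
  "aut_step n Start (a, c) = Commit 0 (c = 1)"
| "aut_step n (Commit i b) (a, c) = (if Suc i < n then Commit (Suc i) (c = 1) else enter_wait a c)"
| "aut_step n (Wait i) (a, c) = (if Suc i < n then Wait (Suc i) else enter_wait a c)"
| "aut_step n (First i b) (a, c) = (if Suc i < n then First (Suc i) (a = 1) else enter_middle a c)"
| "aut_step n (Prefix i b) (a, c) = (if Suc i < n then
     (if c = 1 then (if a = 1 then Reject else Dip (Suc i)) else Prefix (Suc i) (a = 1)) else Reject)"
| "aut_step n (Dip i) (a, c) = (if Suc i < n then After (Suc i) else enter_middle a c)"
| "aut_step n (After i) (a, c) = (if Suc i < n then After (Suc i) else enter_middle a c)"
| "aut_step n (Second i b) (a, c) = (if Suc i < n then Second (Suc i) (a = 1) else Accept)"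
| "aut_step n Accept x = Accept"
| "aut_step n Reject x = Reject"

primrec state_run :: "nat \<Rightarrow> (nat \<Rightarrow> nat \<times> nat) \<Rightarrow> nat \<Rightarrow> state" where
  "state_run n w 0 = Start"
| "state_run n w (Suc t) = aut_step n (state_run n w t) (w t)"

definition accepting :: "nat \<Rightarrow> (nat \<Rightarrow> nat \<times> nat) \<Rightarrow> bool" where
  "accepting n w \<longleftrightarrow> Accept \<in> range (state_run n w) \<and> (\<forall>i<n. \<forall>b.
      (First i b \<in> range (state_run n w) \<longrightarrow> Commit i b \<in> range (state_run n w)) \<and>
      (Second i b \<in> range (state_run n w) \<longrightarrow> Commit i b \<in> range (state_run n w)) \<and>
      (Prefix i b \<in> range (state_run n w) \<longrightarrow> Commit i b \<in> range (state_run n w)) \<and>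
      (Dip i \<in> range (state_run n w) \<longrightarrow> Commit i True \<in> range (state_run n w)))"

definition state_list :: "nat \<Rightarrow> state list" where
  "state_list n = [Start, Accept, Reject] @ concat (map (\<lambda>i. [Commit i True, Commit i False, Wait i,
      First i True, First i False, Prefix i True, Prefix i False, Dip i, After i,
      Second i True, Second i False]) [0..<n])"

lemma mem_state_list: "s \<in> set (state_list n) \<longleftrightarrow> s \<in> {Start, Accept, Reject} \<or>
    (\<exists>i<n. \<exists>b. s \<in> {Commit i b, Wait i, First i b, Prefix i b, Dip i, After i, Second i b})"
  unfolding state_list_def by (auto simp: all_bool_eq ex_bool_eq)

lemma length_state_list: "length (state_list n) = 3 + 11 * n"
  by (induction n) (simp_all add: state_list_def length_concat)

lemma aut_step_closed:
  "n \<ge> 1 \<Longrightarrow> s \<in> set (state_list n) \<Longrightarrow> aut_step n s x \<in> set (state_list n)"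
  by (cases x; cases s) (auto simp: mem_state_list enter_wait_def enter_middle_def)

definition state_var :: "state \<Rightarrow> bformula" where
  "state_var s = BVar (to_nat s)"

definition bimp :: "bformula \<Rightarrow> bformula \<Rightarrow> bformula" where
  "bimp p q = BOr (BNot p) q"

fun bconj :: "bformula list \<Rightarrow> bformula" where
  "bconj [] = BTrue"
| "bconj (p # ps) = BAnd p (bconj ps)"

lemma beval_bconj: "beval a (bconj ps) \<longleftrightarrow> (\<forall>p\<in>set ps. beval a p)"
  by (induction ps) auto

lemma blen_bconj: "blen (bconj ps) = 1 + sum_list (map (\<lambda>p. 1 + blen p) ps)"
  by (induction ps) auto

lemma bvars_bconj: "bvars (bconj ps) = (\<Union>p\<in>set ps. bvars p)"
  by (induction ps) auto

definition commit_clauses :: "nat \<Rightarrow> bformula list" where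
  "commit_clauses i = [
     bimp (state_var (First i True)) (state_var (Commit i True)),
     bimp (state_var (First i False)) (state_var (Commit i False)),
     bimp (state_var (Second i True)) (state_var (Commit i True)),
     bimp (state_var (Second i False)) (state_var (Commit i False)),
     bimp (state_var (Prefix i True)) (state_var (Commit i True)),
     bimp (state_var (Prefix i False)) (state_var (Commit i False)),
     bimp (state_var (Dip i)) (state_var (Commit i True))]"

definition acc_formula :: "nat \<Rightarrow> bformula" where
  "acc_formula n = BAnd (state_var Accept) (bconj (concat (map commit_clauses [0..<n])))"

lemma blen_acc_formula: "blen (acc_formula n) = 3 + 35 * n"
proof -
  have "sum_list (map (\<lambda>p. 1 + blen p) (concat (map commit_clauses [0..<n]))) = 35 * n"
    by (induction n) (simp_all add: commit_clauses_def bimp_def state_var_def)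
  then show ?thesis by (simp add: acc_formula_def blen_bconj state_var_def)
qed

lemma bvars_acc_formula: "bvars (acc_formula n) \<subseteq> to_nat ` set (state_list n)"
proof -
  have "bvars (acc_formula n) = to_nat ` ({Accept} \<union> (\<Union>i<n. {First i True, Commit i True,
     First i False, Commit i False, Second i True, Second i False, Prefix i True, Prefix i False,
     Dip i}))"
    by (auto simp: acc_formula_def bvars_bconj commit_clauses_def bimp_def state_var_def)
  also have "\<dots> \<subseteq> to_nat ` set (state_list n)"
    by (rule image_mono) (auto simp: mem_state_list)
  finally show ?thesis .
qed

definition game_aut :: "nat \<Rightarrow> dwm_aut" where
  "game_aut n = \<lparr>in_alph = {0, 1}, out_alph = {0, 1, 2}, states = to_nat ` set (state_list n),
     init = to_nat Start, delta = (\<lambda>q x. to_nat (aut_step n (from_nat q) x)),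
     acc = acc_formula n\<rparr>"

lemma game_aut_simps [simp]:
  "in_alph (game_aut n) = {0, 1}" "out_alph (game_aut n) = {0, 1, 2}"
  "states (game_aut n) = to_nat ` set (state_list n)" "init (game_aut n) = to_nat Start"
  "acc (game_aut n) = acc_formula n"
  by (simp_all add: game_aut_def)

lemma run_game_aut: "run (game_aut n) w t = to_nat (state_run n w t)"
  by (induction t) (simp_all add: game_aut_def)

lemma lang_game_aut:
  "w \<in> lang (game_aut n) \<longleftrightarrow> (\<forall>i. w i \<in> {0, 1} \<times> {0, 1, 2}) \<and> accepting n w"
proof -
  have "range (run (game_aut n) w) = to_nat ` range (state_run n w)"
    by (auto simp: run_game_aut)
  then have "beval (\<lambda>q. q \<in> range (run (game_aut n) w)) (state_var s) \<longleftrightarrow>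
      s \<in> range (state_run n w)" for s
    by (auto simp: state_var_def)
  then show ?thesis
    unfolding lang_def accepting_def game_aut_simps acc_formula_def
    by (simp add: beval_bconj commit_clauses_def bimp_def all_bool_eq atLeast0LessThan) blast
qed

lemma wf_game_aut:
  assumes "n \<ge> 1"
  shows "wf_dwm (game_aut n)"
proof -
  have "\<forall>q \<in> to_nat ` set (state_list n). \<forall>x.
      to_nat (aut_step n (from_nat q) x) \<in> to_nat ` set (state_list n)"
    using aut_step_closed[OF assms] by auto
  moreover have "Start \<in> set (state_list n)" by (simp add: state_list_def)
  ultimately show ?thesis
    using bvars_acc_formula by (simp add: wf_dwm_def game_aut_def)
qed

lemma aut_size_game_aut: "n \<ge> 1 \<Longrightarrow> aut_size (game_aut n) \<le> 52 * n"
  using card_image_le[of "set (state_list n)" to_nat] card_length[of "state_list n"]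
  by (simp add: aut_size_def length_state_list blen_acc_formula)

definition block_bits :: "nat \<Rightarrow> (nat \<Rightarrow> nat) \<Rightarrow> nat \<Rightarrow> bool list" where
  "block_bits n \<alpha> k = map (\<lambda>i. \<alpha> (n * k + i) = 1) [0..<n]"

lemma length_block_bits [simp]: "length (block_bits n \<alpha> k) = n"
  by (simp add: block_bits_def)

lemma nth_block_bits [simp]: "i < n \<Longrightarrow> block_bits n \<alpha> k ! i = (\<alpha> (n * k + i) = 1)"
  by (simp add: block_bits_def)

definition block_pattern :: "nat \<Rightarrow> (nat \<Rightarrow> nat) \<Rightarrow> bool list \<Rightarrow> nat \<Rightarrow> nat \<Rightarrow> bool" where
  "block_pattern n \<alpha> J p q \<longleftrightarrow> 0 < p \<and> p < q \<and> block_bits n \<alpha> p = J \<and> block_bits n \<alpha> q = J \<and>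
     (\<forall>k. p < k \<and> k < q \<longrightarrow> (\<exists>d. bits_less_at (block_bits n \<alpha> k) J d))"

lemma block_induct:
  assumes "(n::nat) \<ge> 1" "P 0 0" "\<And>k r. Suc r < n \<Longrightarrow> P k r \<Longrightarrow> P k (Suc r)"
    "\<And>k. P k (n - 1) \<Longrightarrow> P (Suc k) 0"
  shows "r < n \<Longrightarrow> P k r"
proof (induction k arbitrary: r)
  case 0
  then show ?case by (induction r) (use assms(2,3) in auto)
next
  case (Suc k)
  have "P (Suc k) 0" using Suc.IH assms(1,4) by simp
  with Suc.prems show ?case by (induction r) (use assms(3) in auto)
qed

definition block_state :: "nat \<Rightarrow> (nat \<Rightarrow> nat \<times> nat) \<Rightarrow> nat \<Rightarrow> nat \<Rightarrow> state" where
  "block_state n w k r = state_run n w (Suc (n * k + r))"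

lemma state_run_Suc_block_state:
  "n \<ge> 1 \<Longrightarrow> state_run n w (Suc t) = block_state n w (t div n) (t mod n)"
  by (simp add: block_state_def)

lemma block_state_Suc:
  "block_state n w k (Suc r) = aut_step n (block_state n w k r) (w (n * k + Suc r))"
  by (simp add: block_state_def)

lemma block_state_next_block:
  "n \<ge> 1 \<Longrightarrow> block_state n w (Suc k) 0 = aut_step n (block_state n w k (n - 1)) (w (n * Suc k))"
  by (simp add: block_state_def algebra_simps)

lemma block_state_visited: "block_state n w k r \<in> range (state_run n w)"
  unfolding block_state_def by (rule rangeI)

lemma block_state_commit:
  "r < n \<Longrightarrow> block_state n w 0 r = Commit r (snd (w r) = 1)"
proof (induction r)
  case 0
  then show ?case by (cases "w 0") (simp add: block_state_def)
next
  case (Suc r)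
  then show ?case using block_state_Suc[of n w 0 r] by (cases "w (Suc r)") simp
qed

definition in_bit :: "nat \<Rightarrow> (nat \<Rightarrow> nat \<times> nat) \<Rightarrow> nat \<Rightarrow> nat \<Rightarrow> bool" where
  "in_bit n w k i = (fst (w (n * k + i)) = 1)"

definition first_copy :: "nat \<Rightarrow> (nat \<Rightarrow> nat \<times> nat) \<Rightarrow> nat \<Rightarrow> bool" where
  "first_copy n w k \<longleftrightarrow> (\<forall>i<n. block_state n w k i = First i (in_bit n w k i))"

definition second_copy :: "nat \<Rightarrow> (nat \<Rightarrow> nat \<times> nat) \<Rightarrow> nat \<Rightarrow> bool" where
  "second_copy n w k \<longleftrightarrow> (\<forall>i<n. block_state n w k i = Second i (in_bit n w k i))"

definition dip_prefix :: "nat \<Rightarrow> (nat \<Rightarrow> nat \<times> nat) \<Rightarrow> nat \<Rightarrow> nat \<Rightarrow> bool" where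
  "dip_prefix n w k r \<longleftrightarrow> (\<exists>d\<le>r. (\<forall>i<d. block_state n w k i = Prefix i (in_bit n w k i)) \<and>
     block_state n w k d = Dip d \<and> \<not> in_bit n w k d)"

definition dip_block :: "nat \<Rightarrow> (nat \<Rightarrow> nat \<times> nat) \<Rightarrow> nat \<Rightarrow> bool" where
  "dip_block n w k \<longleftrightarrow> dip_prefix n w k (n - 1)"

definition pending_copy :: "nat \<Rightarrow> (nat \<Rightarrow> nat \<times> nat) \<Rightarrow> nat \<Rightarrow> bool" where
  "pending_copy n w k \<longleftrightarrow> (\<exists>p<k. first_copy n w p \<and> (\<forall>k'. p < k' \<and> k' < k \<longrightarrow> dip_block n w k'))"

definition copy_witness :: "nat \<Rightarrow> (nat \<Rightarrow> nat \<times> nat) \<Rightarrow> bool" where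
  "copy_witness n w \<longleftrightarrow> (\<exists>p q. p < q \<and> first_copy n w p \<and> second_copy n w q \<and>
     (\<forall>k. p < k \<and> k < q \<longrightarrow> dip_block n w k))"

definition run_inv :: "nat \<Rightarrow> (nat \<Rightarrow> nat \<times> nat) \<Rightarrow> nat \<Rightarrow> nat \<Rightarrow> bool" where
  "run_inv n w k r = (case block_state n w k r of
     Start \<Rightarrow> False
   | Commit i b \<Rightarrow> k = 0 \<and> i = r
   | Wait i \<Rightarrow> i = r
   | First i b \<Rightarrow> i = r \<and> (\<forall>i'\<le>r. block_state n w k i' = First i' (in_bit n w k i'))
   | Prefix i b \<Rightarrow> i = r \<and> pending_copy n w k \<and>
       (\<forall>i'\<le>r. block_state n w k i' = Prefix i' (in_bit n w k i'))
   | Dip i \<Rightarrow> i = r \<and> pending_copy n w k \<and> dip_prefix n w k r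
   | After i \<Rightarrow> i = r \<and> pending_copy n w k \<and> dip_prefix n w k r
   | Second i b \<Rightarrow> i = r \<and> pending_copy n w k \<and>
       (\<forall>i'\<le>r. block_state n w k i' = Second i' (in_bit n w k i'))
   | Accept \<Rightarrow> copy_witness n w
   | Reject \<Rightarrow> True)"

lemma run_inv_first: "run_inv n w 0 0"
  by (cases "w 0") (simp add: run_inv_def block_state_def)

lemma run_inv_next_pos:
  assumes r: "Suc r < n" and inv: "run_inv n w k r"
  shows "run_inv n w k (Suc r)"
proof -
  obtain a c where w: "w (n * k + Suc r) = (a, c)" by fastforce
  have step: "block_state n w k (Suc r) = aut_step n (block_state n w k r) (a, c)"
    using w block_state_Suc by simp
  have bit: "in_bit n w k (Suc r) = (a = 1)" using w by (simp add: in_bit_def)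
  show ?thesis
  proof (cases "block_state n w k r")
    case (Prefix i b)
    show ?thesis
    proof (cases "c = 1 \<and> a \<noteq> 1")
      case True
      then have "dip_prefix n w k (Suc r)"
        using inv Prefix step bit r unfolding dip_prefix_def run_inv_def
        by (intro exI[of _ "Suc r"]) (auto simp: less_Suc_eq_le)
      then show ?thesis using inv Prefix step True r unfolding run_inv_def by auto
    next
      case False
      then show ?thesis using inv Prefix step bit r unfolding run_inv_def by (auto simp: le_Suc_eq)
    qed
  qed (use inv step bit r in \<open>auto simp: run_inv_def dip_prefix_def le_Suc_eq\<close>)
qed

lemma run_inv_next_block:
  assumes n: "n \<ge> 1" and inv: "run_inv n w k (n - 1)"
  shows "run_inv n w (Suc k) 0"
proof -
  obtain a c where w: "w (n * Suc k) = (a, c)" by fastforce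
  have step: "block_state n w (Suc k) 0 = aut_step n (block_state n w k (n - 1)) (a, c)"
    using w block_state_next_block[OF n] by simp
  have bit: "in_bit n w (Suc k) 0 = (a = 1)" using w by (simp add: in_bit_def)
  have last: "\<not> Suc (n - 1) < n" using n by simp
  have entered_dip: "dip_prefix n w (Suc k) 0"
    if "block_state n w (Suc k) 0 = Dip 0" "a \<noteq> 1"
    using that bit unfolding dip_prefix_def by auto
  have pending_after_dip: "pending_copy n w (Suc k)"
    if "pending_copy n w k" "dip_prefix n w k (n - 1)"
    using that unfolding pending_copy_def dip_block_def by (auto simp: less_Suc_eq)
  show ?thesis
  proof (cases "block_state n w k (n - 1)")
    case (First i b)
    then have "first_copy n w k"
      using inv n unfolding run_inv_def first_copy_def by auto
    then have "pending_copy n w (Suc k)" unfolding pending_copy_def by auto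
    then show ?thesis
      using First step last bit entered_dip inv unfolding run_inv_def by (auto simp: enter_middle_def)
  next
    case (Dip i)
    then have "pending_copy n w (Suc k)" using inv pending_after_dip unfolding run_inv_def by auto
    then show ?thesis
      using Dip step last bit entered_dip inv unfolding run_inv_def by (auto simp: enter_middle_def)
  next
    case (After i)
    then have "pending_copy n w (Suc k)" using inv pending_after_dip unfolding run_inv_def by auto
    then show ?thesis
      using After step last bit entered_dip inv unfolding run_inv_def by (auto simp: enter_middle_def)
  next
    case (Second i b)
    then have "pending_copy n w k" "second_copy n w k"
      using inv n unfolding run_inv_def second_copy_def by auto
    then have "copy_witness n w" unfolding pending_copy_def copy_witness_def by auto
    then show ?thesis using Second step last inv unfolding run_inv_def by auto
  qed (use inv step bit last in \<open>auto simp: run_inv_def enter_wait_def\<close>)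
qed

lemma run_inv_holds: "n \<ge> 1 \<Longrightarrow> r < n \<Longrightarrow> run_inv n w k r"
  by (rule block_induct[where P = "run_inv n w"]) (auto intro: run_inv_first run_inv_next_pos run_inv_next_block)

lemma visited_block_state:
  assumes "n \<ge> 1" "s \<in> range (state_run n w)" "s \<noteq> Start"
  obtains k r where "r < n" "s = block_state n w k r"
proof -
  obtain t where "s = state_run n w t" using assms(2) by blast
  with assms(3) obtain t' where "s = state_run n w (Suc t')" by (cases t) auto
  also have "\<dots> = block_state n w (t' div n) (t' mod n)"
    using assms(1) by (rule state_run_Suc_block_state)
  finally show ?thesis using that[of "t' mod n" "t' div n"] assms(1) by simp
qed

lemma visited_Accept_copy_witness:
  assumes n: "n \<ge> 1" and "Accept \<in> range (state_run n w)"
  shows "copy_witness n w"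
proof -
  obtain k r where "r < n" "Accept = block_state n w k r"
    using visited_block_state[OF n assms(2)] by blast
  with run_inv_holds[OF n, of r w k] show ?thesis by (simp add: run_inv_def)
qed

lemma visited_Commit:
  assumes n: "n \<ge> 1" and "Commit i b \<in> range (state_run n w)"
  shows "i < n \<and> b = (snd (w i) = 1)"
proof -
  obtain k r where r: "r < n" and s: "Commit i b = block_state n w k r"
    using visited_block_state[OF n assms(2)] by blast
  with run_inv_holds[OF n, of r w k] have "k = 0" "i = r" by (auto simp: run_inv_def split: state.splits)
  with r s block_state_commit[OF r, of w] show ?thesis by simp
qed

lemma accepting_checks_commitment:
  assumes n: "n \<ge> 1" and acc: "accepting n w" and i: "i < n"
  defines "J \<equiv> block_bits n (snd \<circ> w) 0"
  shows "First i b \<in> range (state_run n w) \<Longrightarrow> b = J ! i"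
    and "Second i b \<in> range (state_run n w) \<Longrightarrow> b = J ! i"
    and "Prefix i b \<in> range (state_run n w) \<Longrightarrow> b = J ! i"
    and "Dip i \<in> range (state_run n w) \<Longrightarrow> J ! i"
proof -
  have commit: "b = J ! i" if "Commit i b \<in> range (state_run n w)" for b
    using visited_Commit[OF n that] i by (simp add: J_def)
  show "First i b \<in> range (state_run n w) \<Longrightarrow> b = J ! i"
    using acc i commit unfolding accepting_def by blast
  show "Second i b \<in> range (state_run n w) \<Longrightarrow> b = J ! i"
    using acc i commit unfolding accepting_def by blast
  show "Prefix i b \<in> range (state_run n w) \<Longrightarrow> b = J ! i"
    using acc i commit unfolding accepting_def by blast
  show "Dip i \<in> range (state_run n w) \<Longrightarrow> J ! i"
    using acc i commit unfolding accepting_def by blast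
qed

lemma copy_block_bits:
  assumes n: "n \<ge> 1" and acc: "accepting n w"
  shows "first_copy n w k \<Longrightarrow> block_bits n (fst \<circ> w) k = block_bits n (snd \<circ> w) 0"
    and "second_copy n w k \<Longrightarrow> block_bits n (fst \<circ> w) k = block_bits n (snd \<circ> w) 0"
proof -
  have visited: "block_state n w k i \<in> range (state_run n w)" for i
    by (rule block_state_visited)
  show "block_bits n (fst \<circ> w) k = block_bits n (snd \<circ> w) 0" if copy: "first_copy n w k"
  proof (rule nth_equalityI)
    fix i assume "i < length (block_bits n (fst \<circ> w) k)"
    then have i: "i < n" by simp
    then have "First i (in_bit n w k i) \<in> range (state_run n w)"
      using copy visited[of i] by (simp add: first_copy_def)
    then show "block_bits n (fst \<circ> w) k ! i = block_bits n (snd \<circ> w) 0 ! i"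
      using accepting_checks_commitment(1)[OF n acc i] i by (simp add: in_bit_def)
  qed simp
  show "block_bits n (fst \<circ> w) k = block_bits n (snd \<circ> w) 0" if copy: "second_copy n w k"
  proof (rule nth_equalityI)
    fix i assume "i < length (block_bits n (fst \<circ> w) k)"
    then have i: "i < n" by simp
    then have "Second i (in_bit n w k i) \<in> range (state_run n w)"
      using copy visited[of i] by (simp add: second_copy_def)
    then show "block_bits n (fst \<circ> w) k ! i = block_bits n (snd \<circ> w) 0 ! i"
      using accepting_checks_commitment(2)[OF n acc i] i by (simp add: in_bit_def)
  qed simp
qed

lemma dip_block_bits_less:
  assumes n: "n \<ge> 1" and acc: "accepting n w" and dip: "dip_block n w k"
  shows "\<exists>d. bits_less_at (block_bits n (fst \<circ> w) k) (block_bits n (snd \<circ> w) 0) d"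
proof -
  let ?J = "block_bits n (snd \<circ> w) 0"
  obtain d where d: "d \<le> n - 1" "\<forall>i<d. block_state n w k i = Prefix i (in_bit n w k i)"
      "block_state n w k d = Dip d" "\<not> in_bit n w k d"
    using dip unfolding dip_block_def dip_prefix_def by blast
  from d(1) n have "d < n" by simp
  have "in_bit n w k i = ?J ! i" if "i < d" for i
    using accepting_checks_commitment(3)[OF n acc, of i "in_bit n w k i"] \<open>d < n\<close> d(2) that
      block_state_visited[of n w k i] by simp
  moreover have "?J ! d"
    using accepting_checks_commitment(4)[OF n acc \<open>d < n\<close>] d(3) block_state_visited[of n w k d]
    by simp
  ultimately have "bits_less_at (block_bits n (fst \<circ> w) k) ?J d"
    using \<open>d < n\<close> d(4) unfolding bits_less_at_def by (auto simp: in_bit_def intro: nth_equalityI)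
  then show ?thesis ..
qed

lemma first_copy_pos: "n \<ge> 1 \<Longrightarrow> first_copy n w p \<Longrightarrow> 0 < p"
  using block_state_commit[of 0 n w] by (cases p) (auto simp: first_copy_def)

lemma accepting_block_pattern:
  assumes n: "n \<ge> 1" and acc: "accepting n w"
  shows "\<exists>p q. block_pattern n (fst \<circ> w) (block_bits n (snd \<circ> w) 0) p q"
proof -
  have "copy_witness n w"
    using visited_Accept_copy_witness[OF n] acc by (simp add: accepting_def)
  then obtain p q where "p < q" "first_copy n w p" "second_copy n w q"
    "\<forall>k. p < k \<and> k < q \<longrightarrow> dip_block n w k"
    unfolding copy_witness_def by blast
  then have "block_pattern n (fst \<circ> w) (block_bits n (snd \<circ> w) 0) p q"
    using copy_block_bits[OF n acc] dip_block_bits_less[OF n acc] first_copy_pos[OF n]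
    unfolding block_pattern_def by blast
  then show ?thesis by blast
qed

lemma block_bits_bits_of:
  assumes "n \<ge> 1" "\<And>t. \<alpha> t = of_bool (bits_of n (x (t div n)) ! (t mod n))"
  shows "block_bits n \<alpha> k = bits_of n (x k)"
  by (rule nth_equalityI) (use assms in auto)

text \<open>Player I's input as a function of O's commitment \<open>J\<close>: block \<open>k \<ge> 1\<close> encodes the
  \<open>k\<close>-th letter of the Zimin word over \<open>2^n\<close> letters and, once that word is exhausted, a
  value different from the one of \<open>J\<close>. Block 0 is irrelevant.\<close>
definition I_block :: "nat \<Rightarrow> bool list \<Rightarrow> nat \<Rightarrow> nat" where
  "I_block n J k = (if k \<le> length (zimin (2 ^ n)) then zimin (2 ^ n) ! (k - 1)
     else of_bool (bits_of n 0 = J))"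

definition I_input :: "nat \<Rightarrow> bool list \<Rightarrow> nat \<Rightarrow> nat" where
  "I_input n J t = of_bool (bits_of n (I_block n J (t div n)) ! (t mod n))"

lemma I_input_independent: "t < 2 ^ 2 ^ n \<Longrightarrow> I_input n J t = I_input n J' t"
proof -
  assume "t < 2 ^ 2 ^ n"
  then have "t div n \<le> length (zimin (2 ^ n))"
    using div_le_dividend[of t n] length_zimin[of "2 ^ n"] by linarith
  then show ?thesis by (simp add: I_input_def I_block_def)
qed

lemma I_input_no_block_pattern:
  assumes n: "n \<ge> 1" and J: "length J = n"
  shows "\<not> block_pattern n (I_input n J) J p q"
proof
  assume pat: "block_pattern n (I_input n J) J p q"
  let ?Z = "zimin (2 ^ n)"
  have block: "block_bits n (I_input n J) k = bits_of n (I_block n J k)" for k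
    using n by (intro block_bits_bits_of) (simp_all add: I_input_def)
  have val: "bits_val (block_bits n (I_input n J) k) = ?Z ! (k - 1)"
    if "k \<le> length ?Z" "0 < k" for k
  proof -
    have "?Z ! (k - 1) \<in> set ?Z" using that by simp
    then have "?Z ! (k - 1) < 2 ^ n" using set_zimin by blast
    then show ?thesis using that by (simp add: block I_block_def bits_val_bits_of)
  qed
  have "bits_of n 1 \<noteq> bits_of n 0"
  proof -
    have "(1::nat) < 2 ^ n" using n by (intro one_less_power) auto
    then show ?thesis using bits_val_bits_of[of 0 n] bits_val_bits_of[of 1 n] by fastforce
  qed
  then have "block_bits n (I_input n J) k \<noteq> J" if "length ?Z < k" for k
    using that by (auto simp: block I_block_def)
  then have q: "q \<le> length ?Z" using pat unfolding block_pattern_def by (meson not_le)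
  have "dominated_repeat ?Z (p - 1) (q - 1)"
    unfolding dominated_repeat_def
  proof (intro conjI allI impI)
    fix k assume k: "p - 1 < k \<and> k < q - 1"
    then have between: "p < Suc k" "Suc k < q" using pat by (auto simp: block_pattern_def)
    then have "\<exists>d. bits_less_at (block_bits n (I_input n J) (Suc k)) J d"
      using pat unfolding block_pattern_def by blast
    then have "bits_val (block_bits n (I_input n J) (Suc k)) < bits_val J"
      using bits_val_less_iff J by simp
    then show "?Z ! k < ?Z ! (p - 1)"
      using pat q between val[of p] val[of "Suc k"] unfolding block_pattern_def by simp
  qed (use pat q val[of p] val[of q] in \<open>auto simp: block_pattern_def\<close>)
  then show False using zimin_no_dominated_repeat by blast
qed

lemma concat_delay_blocks:
  assumes "\<And>i. u i = map a [(\<Sum>j<i. g j) ..< (\<Sum>j<Suc i. g j)]"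
  shows "concat (map u [0..<k]) = map a [0..<(\<Sum>j<k. g j)]"
proof (induction k)
  case (Suc k)
  have "[0..<(\<Sum>j<Suc k. g j)] = [0..<(\<Sum>j<k. g j)] @ [(\<Sum>j<k. g j)..<(\<Sum>j<Suc k. g j)]"
    using upt_add_eq_append[of 0 "\<Sum>j<k. g j" "g k"] by simp
  then show ?case using Suc assms by simp
qed simp

lemma in_word_delay_blocks:
  assumes "delay_fun g" "\<And>i. u i = map a [(\<Sum>j<i. g j) ..< (\<Sum>j<Suc i. g j)]"
  shows "in_word u t = a t"
proof -
  have "(\<Sum>j<Suc t. 1) \<le> (\<Sum>j<Suc t. g j)"
    using assms(1) by (intro sum_mono) (simp add: delay_fun_def)
  then show ?thesis
    unfolding in_word_def concat_delay_blocks[OF assms(2)] by simp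
qed

definition I_strategy :: "nat \<Rightarrow> (nat \<Rightarrow> nat) \<Rightarrow> nat list \<Rightarrow> nat list" where
  "I_strategy n g x = map (I_input n (map (\<lambda>i. x ! i = 1) [0..<n]))
     [(\<Sum>j<length x. g j) ..< (\<Sum>j<Suc (length x). g j)]"

text \<open>Within the first \<open>n\<close> rounds Player I reveals at most \<open>2^2^n\<close> letters, none of which
  depends on the commitment he does not know yet.\<close>
lemma I_strategy_blocks:
  assumes g: "(\<Sum>i<n. g i) \<le> 2 ^ 2 ^ n"
  shows "I_strategy n g (map v [0..<i]) =
    map (I_input n (block_bits n v 0)) [(\<Sum>j<i. g j) ..< (\<Sum>j<Suc i. g j)]"
proof (cases "n \<le> i")
  case True
  then have "map (\<lambda>j. map v [0..<i] ! j = 1) [0..<n] = block_bits n v 0"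
    by (simp add: block_bits_def)
  then show ?thesis by (simp add: I_strategy_def)
next
  case False
  then have "(\<Sum>j<Suc i. g j) \<le> (\<Sum>j<n. g j)" by (intro sum_mono2) auto
  then show ?thesis
    using g by (auto simp: I_strategy_def intro!: I_input_independent)
qed

lemma I_wins_game_aut:
  assumes n: "n \<ge> 1" and g: "delay_fun g" "(\<Sum>i<n. g i) \<le> 2 ^ 2 ^ n"
  shows "I_wins g (in_alph (game_aut n)) (out_alph (game_aut n)) (lang (game_aut n))"
  unfolding I_wins_def game_aut_simps
proof (intro exI[of _ "I_strategy n g"] conjI allI impI)
  fix x :: "nat list"
  show "length (I_strategy n g x) = g (length x)" by (simp add: I_strategy_def)
  show "set (I_strategy n g x) \<subseteq> {0, 1}" by (auto simp: I_strategy_def I_input_def)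
next
  fix u :: "nat \<Rightarrow> nat list" and v :: "nat \<Rightarrow> nat"
  assume "\<forall>i. u i = I_strategy n g (map v [0..<i])"
  then have "u i = map (I_input n (block_bits n v 0)) [(\<Sum>j<i. g j) ..< (\<Sum>j<Suc i. g j)]" for i
    using I_strategy_blocks[OF g(2)] by simp
  then have "fst \<circ> play_word u v = I_input n (block_bits n v 0)" "snd \<circ> play_word u v = v"
    using in_word_delay_blocks[OF g(1)] by (auto simp: play_word_def)
  then show "play_word u v \<notin> lang (game_aut n)"
    using accepting_block_pattern[OF n] I_input_no_block_pattern[OF n] lang_game_aut by fastforce
qed

definition O_output :: "nat \<Rightarrow> bool list \<Rightarrow> nat \<Rightarrow> nat \<Rightarrow> (nat \<Rightarrow> nat) \<Rightarrow> nat \<Rightarrow> nat" where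
  "O_output n J P Q dd t = (if t < n then of_bool (J ! t)
     else if t div n = P \<and> t mod n = 0 then 1
     else if P < t div n \<and> t div n < Q \<and> t mod n = dd (t div n) then 1
     else if t div n = Q \<and> t mod n = 0 then 2 else 0)"

lemma O_output_block:
  assumes "r < n"
  shows "O_output n J P Q dd (n * k + r) = (if k = 0 then of_bool (J ! r)
     else if k = P \<and> r = 0 then 1
     else if P < k \<and> k < Q \<and> r = dd k then 1
     else if k = Q \<and> r = 0 then 2 else 0)"
proof -
  have "n * k + r < n \<longleftrightarrow> k = 0" using assms by (cases k) auto
  then show ?thesis using assms by (auto simp: O_output_def)
qed

definition expected_state ::
    "nat \<Rightarrow> (nat \<Rightarrow> nat) \<Rightarrow> bool list \<Rightarrow> nat \<Rightarrow> nat \<Rightarrow> (nat \<Rightarrow> nat) \<Rightarrow> nat \<Rightarrow> nat \<Rightarrow> state" where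
  "expected_state n \<alpha> J P Q dd k r = (if k = 0 then Commit r (J ! r)
     else if k < P then Wait r
     else if k = P then First r (\<alpha> (n * k + r) = 1)
     else if k < Q then (if r < dd k then Prefix r (\<alpha> (n * k + r) = 1)
       else if r = dd k then Dip r else After r)
     else if k = Q then Second r (\<alpha> (n * k + r) = 1) else Accept)"

locale pattern_play =
  fixes n :: nat and \<alpha> :: "nat \<Rightarrow> nat" and J :: "bool list" and P Q :: nat and dd :: "nat \<Rightarrow> nat"
  assumes n: "n \<ge> 1" and PQ: "0 < P" "P < Q"
    and first: "block_bits n \<alpha> P = J" and second: "block_bits n \<alpha> Q = J"
    and dips: "\<And>k. P < k \<Longrightarrow> k < Q \<Longrightarrow> bits_less_at (block_bits n \<alpha> k) J (dd k)"
begin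

abbreviation "play \<equiv> \<lambda>t. (\<alpha> t, O_output n J P Q dd t)"
abbreviation "expected \<equiv> expected_state n \<alpha> J P Q dd"

lemma first_bits: "r < n \<Longrightarrow> (\<alpha> (n * P + r) = 1) = J ! r"
  using first by auto

lemma second_bits: "r < n \<Longrightarrow> (\<alpha> (n * Q + r) = 1) = J ! r"
  using second by auto

lemma dip_bits:
  assumes "P < k" "k < Q"
  shows "dd k < n" "\<And>r. r < dd k \<Longrightarrow> (\<alpha> (n * k + r) = 1) = J ! r"
    "\<alpha> (n * k + dd k) \<noteq> 1" "J ! dd k"
proof -
  have d: "bits_less_at (block_bits n \<alpha> k) J (dd k)" using dips assms .
  then show "dd k < n" "\<alpha> (n * k + dd k) \<noteq> 1" "J ! dd k" by (auto simp: bits_less_at_def)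
  fix r assume "r < dd k"
  then have "take (dd k) (block_bits n \<alpha> k) ! r = take (dd k) J ! r" using d by (simp add: bits_less_at_def)
  then show "(\<alpha> (n * k + r) = 1) = J ! r"
    using \<open>r < dd k\<close> \<open>dd k < n\<close> by simp
qed

lemma expected_next_pos:
  assumes r: "Suc r < n" and IH: "block_state n play k r = expected k r"
  shows "block_state n play k (Suc r) = expected k (Suc r)"
proof -
  have step: "block_state n play k (Suc r) =
      aut_step n (expected k r) (\<alpha> (n * k + Suc r), O_output n J P Q dd (n * k + Suc r))"
    using block_state_Suc[of n play k r] IH by simp
  have out: "O_output n J P Q dd (n * k + Suc r) = (if k = 0 then of_bool (J ! Suc r)
     else if P < k \<and> k < Q \<and> Suc r = dd k then 1 else 0)"
    using O_output_block[OF r, of J P Q dd k] by auto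
  consider "k = 0" | "0 < k \<and> k < P" | "k = P" | "P < k \<and> k < Q" | "k = Q" | "Q < k" by linarith
  then show ?thesis
  proof cases
    case 4
    have "\<alpha> (Suc (n * k + r)) \<noteq> 1" if "Suc r = dd k"
    proof -
      have pos: "Suc (n * k + r) = n * k + dd k" using that by simp
      have "\<alpha> (n * k + dd k) \<noteq> 1" using dip_bits(3)[of k] 4 by simp
      then show ?thesis unfolding pos .
    qed
    then show ?thesis using step out 4 r dip_bits(1)[of k] PQ by (auto simp: expected_state_def)
  qed (use step out r PQ in \<open>auto simp: expected_state_def\<close>)
qed

lemma expected_next_block:
  assumes IH: "block_state n play k (n - 1) = expected k (n - 1)"
  shows "block_state n play (Suc k) 0 = expected (Suc k) 0"
proof -
  have step: "block_state n play (Suc k) 0 =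
      aut_step n (expected k (n - 1)) (\<alpha> (n * Suc k + 0), O_output n J P Q dd (n * Suc k + 0))"
    using block_state_next_block[OF n, of play k] IH by simp
  have out: "O_output n J P Q dd (n * Suc k + 0) = (if Suc k = P then 1
     else if P < Suc k \<and> Suc k < Q \<and> 0 = dd (Suc k) then 1
     else if Suc k = Q then 2 else 0)"
    using O_output_block[of 0 n J P Q dd "Suc k"] n by auto
  have last: "\<not> Suc (n - 1) < n" using n by simp
  have dip0: "\<alpha> (n * Suc k + 0) \<noteq> 1" if "P < Suc k" "Suc k < Q" "dd (Suc k) = 0"
    using dip_bits(3)[OF that(1,2)] that(3) by simp
  consider "k < P" | "k = P" | "P < k \<and> k < Q" | "k = Q" | "Q < k" by linarith
  then show ?thesis
  proof cases
    case 3
    then have "expected k (n - 1) = (if n - 1 = dd k then Dip (n - 1) else After (n - 1))"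
      using dip_bits(1)[of k] by (auto simp: expected_state_def)
    then show ?thesis using step out last PQ 3 dip0 by (auto simp: expected_state_def enter_middle_def)
  qed (use step out last PQ dip0 in \<open>auto simp: expected_state_def enter_wait_def enter_middle_def\<close>)
qed

lemma block_state_expected: "r < n \<Longrightarrow> block_state n play k r = expected k r"
proof (rule block_induct[where P = "\<lambda>k r. block_state n play k r = expected k r"])
  show "block_state n play 0 0 = expected 0 0"
    using PQ n by (simp add: block_state_def expected_state_def O_output_def)
qed (use n in \<open>auto intro: expected_next_pos expected_next_block\<close>)

lemma visited_expected:
  assumes "s \<in> range (state_run n play)" "s \<noteq> Start"
  obtains k r where "r < n" "s = expected k r"
  using visited_block_state[OF n assms] block_state_expected by metis

lemma expected_visited: "r < n \<Longrightarrow> expected k r \<in> range (state_run n play)"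
  using block_state_visited[of n play k r] block_state_expected by simp

lemma accepting_O_output: "accepting n play"
  unfolding accepting_def
proof (intro conjI allI impI)
  have "expected (Suc Q) 0 = Accept" using PQ by (simp add: expected_state_def)
  then show "Accept \<in> range (state_run n play)" using expected_visited[of 0 "Suc Q"] n by simp
next
  fix i b assume i: "i < n"
  have commit: "Commit i (J ! i) \<in> range (state_run n play)"
    using expected_visited[OF i, of 0] by (simp add: expected_state_def)
  show "Commit i b \<in> range (state_run n play)" if vis: "First i b \<in> range (state_run n play)"
  proof -
    obtain k r where "r < n" "First i b = expected k r"
      by (rule visited_expected[OF vis]) auto
    then have "b = J ! i" using PQ first_bits by (auto simp: expected_state_def split: if_splits)
    then show ?thesis using commit by simp
  qed
  show "Commit i b \<in> range (state_run n play)" if vis: "Second i b \<in> range (state_run n play)"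
  proof -
    obtain k r where "r < n" "Second i b = expected k r"
      by (rule visited_expected[OF vis]) auto
    then have "b = J ! i" using PQ second_bits by (auto simp: expected_state_def split: if_splits)
    then show ?thesis using commit by simp
  qed
  show "Commit i b \<in> range (state_run n play)" if vis: "Prefix i b \<in> range (state_run n play)"
  proof -
    obtain k r where "r < n" "Prefix i b = expected k r"
      by (rule visited_expected[OF vis]) auto
    then have "b = J ! i" using PQ dip_bits(2) by (auto simp: expected_state_def split: if_splits)
    then show ?thesis using commit by simp
  qed
  show "Commit i True \<in> range (state_run n play)" if vis: "Dip i \<in> range (state_run n play)"
  proof -
    obtain k r where "r < n" "Dip i = expected k r"
      by (rule visited_expected[OF vis]) auto
    then have "J ! i" using PQ dip_bits(4) by (auto simp: expected_state_def split: if_splits)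
    then show ?thesis using commit by simp
  qed
qed

end

lemma block_pattern_of_dominated_repeat:
  assumes "dominated_repeat (map (\<lambda>k. bits_val (block_bits n \<alpha> (Suc k))) [0..<N]) p q"
  shows "block_pattern n \<alpha> (block_bits n \<alpha> (Suc p)) (Suc p) (Suc q)"
  unfolding block_pattern_def
proof (intro conjI allI impI)
  have pq: "p < q" "q < N"
    "bits_val (block_bits n \<alpha> (Suc p)) = bits_val (block_bits n \<alpha> (Suc q))"
    using assms by (auto simp: dominated_repeat_def)
  then show "Suc p < Suc q" by simp
  show "block_bits n \<alpha> (Suc q) = block_bits n \<alpha> (Suc p)"
    using bits_val_inj pq(3) by simp
  fix k assume k: "Suc p < k \<and> k < Suc q"
  then obtain k' where k': "k = Suc k'" "p < k'" "k' < q" by (cases k) auto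
  then have "bits_val (block_bits n \<alpha> k) < bits_val (block_bits n \<alpha> (Suc p))"
    using assms pq(2) by (auto simp: dominated_repeat_def)
  then show "\<exists>d. bits_less_at (block_bits n \<alpha> k) (block_bits n \<alpha> (Suc p)) d"
    using bits_val_less_iff by simp
qed auto

definition block_values :: "nat \<Rightarrow> (nat \<Rightarrow> nat) \<Rightarrow> nat list" where
  "block_values n \<alpha> = map (\<lambda>k. bits_val (block_bits n \<alpha> (Suc k))) [0..<2 ^ 2 ^ n]"

definition O_repeat :: "nat \<Rightarrow> (nat \<Rightarrow> nat) \<Rightarrow> nat \<times> nat" where
  "O_repeat n \<alpha> = (SOME (p, q). dominated_repeat (block_values n \<alpha>) p q)"

lemma dominated_repeat_O_repeat:
  "dominated_repeat (block_values n \<alpha>) (fst (O_repeat n \<alpha>)) (snd (O_repeat n \<alpha>))"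
proof -
  have "bits_val (block_bits n \<alpha> k) < 2 ^ n" for k
    using bits_val_less[of "block_bits n \<alpha> k"] by simp
  then have "set (block_values n \<alpha>) \<subseteq> {..<2 ^ n}" by (auto simp: block_values_def)
  then obtain p q where "dominated_repeat (block_values n \<alpha>) p q"
    using dominated_repeat_exists[of "block_values n \<alpha>" "2 ^ n"] by (auto simp: block_values_def)
  then have "\<exists>pq. case pq of (p, q) \<Rightarrow> dominated_repeat (block_values n \<alpha>) p q" by auto
  then show ?thesis unfolding O_repeat_def by (metis (mono_tags, lifting) case_prod_beta someI_ex)
qed

definition dip_pos :: "nat \<Rightarrow> (nat \<Rightarrow> nat) \<Rightarrow> bool list \<Rightarrow> nat \<Rightarrow> nat" where
  "dip_pos n \<alpha> J k = (SOME d. bits_less_at (block_bits n \<alpha> k) J d)"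

definition lookahead :: "nat \<Rightarrow> nat" where
  "lookahead n = n * (2 ^ 2 ^ n + 1)"

text \<open>After the first move Player O knows blocks \<open>0, \<dots>, 2^2^n\<close> of the input, finds a
  pattern among them and then plays the corresponding output.\<close>
definition O_strategy :: "nat \<Rightarrow> nat list \<Rightarrow> nat" where
  "O_strategy n x = (let \<alpha> = (!) (take (lookahead n) x); (p, q) = O_repeat n \<alpha>;
     J = block_bits n \<alpha> (Suc p) in O_output n J (Suc p) (Suc q) (dip_pos n \<alpha> J) (length x - lookahead n))"

lemma block_bits_cong:
  "(\<And>i. i < n \<Longrightarrow> \<alpha> (n * k + i) = \<beta> (n * k + i)) \<Longrightarrow> block_bits n \<alpha> k = block_bits n \<beta> k"
  by (simp add: block_bits_def)

lemma accepting_O_strategy: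
  assumes n: "n \<ge> 1" and \<alpha>: "\<And>t. t < lookahead n \<Longrightarrow> \<alpha> t = pre ! t"
  defines "p \<equiv> fst (O_repeat n ((!) pre))" and "q \<equiv> snd (O_repeat n ((!) pre))"
  defines "J \<equiv> block_bits n ((!) pre) (Suc p)"
  shows "accepting n (\<lambda>t. (\<alpha> t, O_output n J (Suc p) (Suc q) (dip_pos n ((!) pre) J) t))"
proof -
  have rep: "dominated_repeat (block_values n ((!) pre)) p q"
    unfolding p_def q_def by (rule dominated_repeat_O_repeat)
  then have pat: "block_pattern n ((!) pre) J (Suc p) (Suc q)"
    unfolding J_def block_values_def by (rule block_pattern_of_dominated_repeat)
  have same: "block_bits n \<alpha> k = block_bits n ((!) pre) k" if "k \<le> 2 ^ 2 ^ n" for k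
  proof (rule block_bits_cong)
    fix i assume "i < n"
    have "n * k \<le> n * 2 ^ 2 ^ n" using that by simp
    moreover have "lookahead n = n * 2 ^ 2 ^ n + n" by (simp add: lookahead_def)
    ultimately have "n * k + i < lookahead n" using \<open>i < n\<close> by linarith
    then show "\<alpha> (n * k + i) = pre ! (n * k + i)" by (rule \<alpha>)
  qed
  have q: "Suc q \<le> 2 ^ 2 ^ n" using rep by (simp add: dominated_repeat_def block_values_def)
  have "pattern_play n \<alpha> J (Suc p) (Suc q) (dip_pos n ((!) pre) J)"
  proof unfold_locales
    show "n \<ge> 1" by (rule n)
    show "0 < Suc p" "Suc p < Suc q" using pat by (auto simp: block_pattern_def)
    show "block_bits n \<alpha> (Suc p) = J" "block_bits n \<alpha> (Suc q) = J"
      using pat q same by (auto simp: block_pattern_def)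
    fix k assume k: "Suc p < k" "k < Suc q"
    then have "\<exists>d. bits_less_at (block_bits n ((!) pre) k) J d"
      using pat by (auto simp: block_pattern_def)
    then have "bits_less_at (block_bits n ((!) pre) k) J (dip_pos n ((!) pre) J k)"
      unfolding dip_pos_def by (rule someI_ex)
    then show "bits_less_at (block_bits n \<alpha> k) J (dip_pos n ((!) pre) J k)"
      using same[of k] k q by simp
  qed
  then show ?thesis by (rule pattern_play.accepting_O_output)
qed

lemma O_wins_game_aut:
  assumes n: "n \<ge> 1"
  shows "O_wins (\<lambda>i. if i = 0 then lookahead n else 1)
    (in_alph (game_aut n)) (out_alph (game_aut n)) (lang (game_aut n))"
  unfolding O_wins_def game_aut_simps
proof (intro exI[of _ "O_strategy n"] conjI allI impI)
  show O_range: "O_strategy n x \<in> {0, 1, 2}" for x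
    unfolding O_strategy_def O_output_def Let_def by (auto split: prod.split)
  fix u v
  assume u: "\<forall>i. length (u i) = (if i = 0 then lookahead n else 1) \<and> set (u i) \<subseteq> {0, 1}"
    and v: "\<forall>i. v i = O_strategy n (concat (map u [0..<Suc i]))"
  have split: "concat (map u [0..<Suc i]) = u 0 @ concat (map u [Suc 0..<Suc i])" for i
    by (simp add: upt_conv_Cons del: upt_Suc)
  have length_tail: "length (concat (map u [Suc 0..<Suc i])) = i" for i
    using u by (induction i) auto
  have pre: "length (u 0) = lookahead n" using u by simp
  have "in_word u t = u 0 ! t" if "t < lookahead n" for t
    unfolding in_word_def split using that pre by (simp add: nth_append)
  moreover have "v t = O_strategy n (u 0 @ concat (map u [Suc 0..<Suc t]))" for t
    using v[rule_format, of t, unfolded split] .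
  ultimately have acc: "accepting n (\<lambda>t. (in_word u t, v t))"
    using accepting_O_strategy[OF n, of "in_word u" "u 0"]
    by (simp add: O_strategy_def pre length_tail case_prod_beta Let_def del: upt_Suc)
  have in_range: "in_word u t \<in> {0, 1}" for t
  proof -
    have "t < length (concat (map u [0..<Suc t]))"
      unfolding split using pre length_tail[of t] n by (simp add: lookahead_def del: upt_Suc)
    then have "in_word u t \<in> set (concat (map u [0..<Suc t]))"
      unfolding in_word_def by (rule nth_mem)
    then show ?thesis using u by auto
  qed
  have "v t \<in> {0, 1, 2}" for t using v O_range by metis
  with in_range have "(in_word u t, v t) \<in> {0, 1} \<times> {0, 1, 2}" for t by blast
  moreover have "play_word u v = (\<lambda>t. (in_word u t, v t))" by (rule ext) (simp add: play_word_def)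
  ultimately show "play_word u v \<in> lang (game_aut n)"
    using acc unfolding lang_game_aut by simp
qed

theorem theorem3:
  shows "\<exists>c::nat. \<forall>n::nat. n \<ge> 1 \<longrightarrow>
    (\<exists>A. wf_dwm A \<and> aut_size A \<le> c * n \<and>
       (\<exists>f. const_delay f \<and> O_wins f (in_alph A) (out_alph A) (lang A)) \<and>
       (\<forall>g. delay_fun g \<and> (\<Sum>i<n. g i) \<le> 2 ^ (2 ^ n) \<longrightarrow>
            I_wins g (in_alph A) (out_alph A) (lang A)))"
proof (intro exI[of _ 52] allI impI)
  fix n :: nat
  assume n: "n \<ge> 1"
  have "const_delay (\<lambda>i. if i = 0 then lookahead n else 1)"
    using n by (simp add: const_delay_def delay_fun_def lookahead_def)
  then show "\<exists>A. wf_dwm A \<and> aut_size A \<le> 52 * n \<and>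
       (\<exists>f. const_delay f \<and> O_wins f (in_alph A) (out_alph A) (lang A)) \<and>
       (\<forall>g. delay_fun g \<and> (\<Sum>i<n. g i) \<le> 2 ^ (2 ^ n) \<longrightarrow>
            I_wins g (in_alph A) (out_alph A) (lang A))"
    using wf_game_aut[OF n] aut_size_game_aut[OF n] O_wins_game_aut[OF n] I_wins_game_aut[OF n]
    by (intro exI[of _ "game_aut n"]) blast
qed

end
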